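(* Let $P_1,\dots,P_T\in\mathbb{R}^{d\times d}$ be orthogonal projections and let $\tau(1),\tau(2),\dots$ be i.i.d. uniform on $\{1,\dots,T\}$. Let $\bar r=\frac1T\sum_{m=1}^T(d-\operatorname{rank}P_m)$. Then for every $k\ge1$, $$\mathbb{E}_\tau\Big[\frac1T\sum_{m=1}^T\big\|(I-P_m)P_{\tau(k)}\cdots P_{\tau(1)}\big\|^2\Big]\le \frac{1}{k}\cdot\frac1T\sum_{m=1}^T\operatorname{rank}(P_m)=\frac{d-\bar r}{k}.$$
   Context: $\|\cdot\|$ denotes the spectral norm. (In the application, $P_m=I-X_m^+X_m$ is the projection onto $\ker X_m$, so $\operatorname{rank}P_m=d-\operatorname{rank}X_m$ and the bound reads $(d-r_{\mathrm{avg}})/k$ with $r_{\mathrm{avg}}$ the average rank of the data matrices.) *)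

theory Defs
  imports "HOL-Analysis.Analysis"
begin

definition spec_norm :: "real^'n^'m \<Rightarrow> real" where
  "spec_norm A = onorm (\<lambda>x. A *v x)"

definition orth_proj :: "real^'n^'n \<Rightarrow> bool" where
  "orth_proj P \<longleftrightarrow> P ** P = P \<and> transpose P = P"

text \<open>Product P (tau (k-1)) ** ... ** P (tau 0) (indices shifted to start at 0).\<close>
fun proj_prod :: "(nat \<Rightarrow> real^'n^'n) \<Rightarrow> (nat \<Rightarrow> nat) \<Rightarrow> nat \<Rightarrow> real^'n^'n" where
  "proj_prod P tau 0 = mat 1"
| "proj_prod P tau (Suc j) = P (tau j) ** proj_prod P tau j"

end

theory Submission
  imports Defs
begin

text \<open>
  For an orthogonal projection \<open>P\<close> the Frobenius norm splits as
  \<open>\<parallel>A\<parallel>\<^sub>F\<^sup>2 = \<parallel>P A\<parallel>\<^sub>F\<^sup>2 + \<parallel>(I - P) A\<parallel>\<^sub>F\<^sup>2\<close>. Hence the averaged Frobenius energy of the random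
  product \<open>\<Pi>\<^sub>j = P\<^sub>\<tau>\<^sub>(\<^sub>j\<^sub>) \<cdots> P\<^sub>\<tau>\<^sub>(\<^sub>1\<^sub>)\<close> drops from step \<open>j\<close> to step \<open>j + 1\<close> by exactly the averaged
  residual \<open>\<parallel>(I - P\<^sub>m) \<Pi>\<^sub>j\<parallel>\<^sub>F\<^sup>2\<close>, which dominates the averaged spectral residual \<open>r\<^sub>j\<close>.
  Multiplying by a projection on the right does not increase the spectral norm, so \<open>r\<^sub>j\<close>
  is nonincreasing in \<open>j\<close>; summing the energy drops over \<open>j = 1, \<dots>, k\<close> therefore bounds
  \<open>k r\<^sub>k\<close> by the energy after one step, \<open>(1/T) \<Sum>\<^sub>m \<parallel>P\<^sub>m\<parallel>\<^sub>F\<^sup>2 = (1/T) \<Sum>\<^sub>m rank P\<^sub>m\<close>.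
\<close>

lemma orth_proj_idem: "orth_proj P \<Longrightarrow> P *v (P *v x) = P *v x"
  unfolding orth_proj_def by (simp add: matrix_vector_mul_assoc)

lemma orth_proj_inner_commute:
  assumes "orth_proj P"
  shows "(P *v x) \<bullet> y = x \<bullet> (P *v y)"
proof -
  have "P *v x = x v* P"
    using assms by (metis orth_proj_def transpose_matrix_vector)
  then show ?thesis by (simp add: dot_lmul_matrix)
qed

lemma orth_proj_pythagorean:
  assumes "orth_proj P"
  shows "(norm (P *v x))\<^sup>2 + (norm ((mat 1 - P) *v x))\<^sup>2 = (norm x)\<^sup>2"
proof -
  have "(P *v x) \<bullet> (x - P *v x) = 0"
    using orth_proj_inner_commute[OF assms, of x "P *v x"] orth_proj_idem[OF assms, of x]
    by (simp add: inner_diff_right inner_commute)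
  then have "(norm (P *v x + (x - P *v x)))\<^sup>2 = (norm (P *v x))\<^sup>2 + (norm (x - P *v x))\<^sup>2"
    by (intro norm_add_Pythagorean) (simp add: orthogonal_def)
  then show ?thesis by (simp add: matrix_vector_mult_diff_rdistrib)
qed

lemma spec_norm_nonneg: "spec_norm A \<ge> 0"
  unfolding spec_norm_def by (rule onorm_pos_le) simp

lemma spec_norm_orth_proj_le_1:
  assumes "orth_proj P"
  shows "spec_norm P \<le> 1"
  unfolding spec_norm_def
proof (rule onorm_le)
  fix x
  have "(norm (P *v x))\<^sup>2 \<le> (norm x)\<^sup>2"
    using orth_proj_pythagorean[OF assms, of x] zero_le_power2[of "norm ((mat 1 - P) *v x)"]
    by linarith
  then show "norm (P *v x) \<le> 1 * norm x" using power2_le_imp_le by simp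
qed

lemma spec_norm_mult_orth_proj_le:
  fixes A :: "real^'n^'m"
  assumes "orth_proj Q"
  shows "spec_norm (A ** Q) \<le> spec_norm A"
proof -
  have "(\<lambda>x. (A ** Q) *v x) = (\<lambda>x. A *v x) \<circ> (\<lambda>x. Q *v x)"
    by (auto simp: matrix_vector_mul_assoc)
  then have "spec_norm (A ** Q) \<le> spec_norm A * spec_norm Q"
    unfolding spec_norm_def by (metis onorm_compose matrix_vector_mul_bounded_linear)
  also have "\<dots> \<le> spec_norm A"
    using spec_norm_orth_proj_le_1[OF assms] spec_norm_nonneg[of A] by (simp add: mult_left_le)
  finally show ?thesis .
qed

text \<open>
  On \<^typ>\<open>real^'n^'m\<close> the library norm is the Euclidean norm of the vector of rows,
  i.e.\ the Frobenius norm.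
\<close>

lemma power2_norm_vec: "(norm (v :: 'a :: real_inner^'n))\<^sup>2 = (\<Sum>i\<in>UNIV. (norm (v $ i))\<^sup>2)"
  by (simp add: power2_norm_eq_inner inner_vec_def)

lemma power2_norm_matrix_columns:
  "(norm (A :: real^'n^'m))\<^sup>2 = (\<Sum>j\<in>UNIV. (norm (A *v axis j 1))\<^sup>2)"
proof -
  have "(norm A)\<^sup>2 = (\<Sum>i\<in>UNIV. \<Sum>j\<in>UNIV. (A $ i $ j)\<^sup>2)"
    by (simp add: power2_norm_vec[of A] power2_norm_vec[of "A $ _"])
  also have "\<dots> = (\<Sum>j\<in>UNIV. \<Sum>i\<in>UNIV. (A $ i $ j)\<^sup>2)"
    by (rule sum.swap)
  also have "\<dots> = (\<Sum>j\<in>UNIV. (norm (A *v axis j 1))\<^sup>2)"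
    by (simp add: power2_norm_vec matrix_vector_mult_basis column_def)
  finally show ?thesis .
qed

lemma spec_norm_le_norm: "spec_norm (A :: real^'n^'m) \<le> norm A"
  unfolding spec_norm_def
proof (rule onorm_le)
  fix x
  have "(norm (A *v x))\<^sup>2 = (\<Sum>i\<in>UNIV. (A $ i \<bullet> x)\<^sup>2)"
    by (simp add: power2_norm_vec matrix_vector_mul_component)
  also have "\<dots> \<le> (\<Sum>i\<in>UNIV. (norm (A $ i) * norm x)\<^sup>2)"
    by (intro sum_mono power2_le_iff_abs_le[THEN iffD2]) (simp_all add: Cauchy_Schwarz_ineq2)
  also have "\<dots> = (norm A * norm x)\<^sup>2"
    by (simp add: power_mult_distrib sum_distrib_right power2_norm_vec[of A])
  finally show "norm (A *v x) \<le> norm A * norm x"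
    by (rule power2_le_imp_le) simp
qed

lemma orth_proj_pythagorean_matrix:
  fixes A :: "real^'k^'n"
  assumes "orth_proj P"
  shows "(norm (P ** A))\<^sup>2 + (norm ((mat 1 - P) ** A))\<^sup>2 = (norm A)\<^sup>2"
  by (simp add: power2_norm_matrix_columns sum.distrib[symmetric] orth_proj_pythagorean[OF assms]
      flip: matrix_vector_mul_assoc)

text \<open>
  Expanding \<open>P e\<^sub>i\<close> in an orthonormal basis \<open>B\<close> of the range gives \<open>\<parallel>P e\<^sub>i\<parallel>\<^sup>2 = \<Sum>\<^sub>b\<^sub>\<in>\<^sub>B b\<^sub>i\<^sup>2\<close>;
  summing over \<open>i\<close> counts the unit vectors in \<open>B\<close>.
\<close>

lemma power2_norm_orth_proj:
  assumes "orth_proj P"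
  shows "(norm P)\<^sup>2 = real (rank P)"
proof -
  have "subspace (range ((*v) P))"
    by (metis linear_subspace_image subspace_UNIV matrix_vector_mul_linear)
  then obtain B where B: "B \<subseteq> range ((*v) P)" "pairwise orthogonal B" "\<And>b. b \<in> B \<Longrightarrow> norm b = 1"
    "independent B" "card B = dim (range ((*v) P))" "span B = range ((*v) P)"
    using orthonormal_basis_subspace by metis
  have "finite B" using B(4) independent_imp_finite by blast
  have column: "(norm (P *v axis i 1))\<^sup>2 = (\<Sum>b\<in>B. (b $ i)\<^sup>2)" for i
  proof -
    let ?v = "P *v axis i 1"
    have coeff: "?v \<bullet> b = b $ i" if "b \<in> B" for b
    proof -
      have "P *v b = b" using B(1) that orth_proj_idem[OF assms] by auto
      then show ?thesis
        using orth_proj_inner_commute[OF assms, of "axis i 1" b] by (simp add: inner_axis')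
    qed
    have "?v \<in> span B" using B(6) by auto
    then have "(norm ?v)\<^sup>2 = ?v \<bullet> (\<Sum>b\<in>B. (?v \<bullet> b) *\<^sub>R b)"
      using orthonormal_basis_expand[OF B(2,3) _ \<open>finite B\<close>] by (simp add: power2_norm_eq_inner)
    also have "\<dots> = (\<Sum>b\<in>B. (b $ i)\<^sup>2)"
      by (simp add: inner_sum_right coeff power2_eq_square)
    finally show ?thesis .
  qed
  have "(norm P)\<^sup>2 = (\<Sum>b\<in>B. \<Sum>i\<in>UNIV. (b $ i)\<^sup>2)"
    by (simp add: power2_norm_matrix_columns column sum.swap[of _ UNIV B])
  also have "\<dots> = (\<Sum>b\<in>B. (norm b)\<^sup>2)"
    by (simp add: power2_norm_vec)
  also have "\<dots> = card B"
    by (simp add: B(3))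
  finally show ?thesis using B(5) by (simp add: rank_dim_range)
qed

lemma proj_prod_cong: "(\<And>i. i < j \<Longrightarrow> tau i = tau' i) \<Longrightarrow> proj_prod P tau j = proj_prod P tau' j"
  by (induction j) auto

lemma proj_prod_Suc_right: "proj_prod P tau (Suc j) = proj_prod P (tau \<circ> Suc) j ** P (tau 0)"
proof (induction j arbitrary: tau)
  case (Suc j)
  then show ?case by (simp add: matrix_mul_assoc)
qed simp

lemma sum_PiE_lessThan_Suc_last:
  "(\<Sum>tau\<in>{..<Suc j} \<rightarrow>\<^sub>E S. f tau) = (\<Sum>s\<in>{..<j} \<rightarrow>\<^sub>E S. \<Sum>m\<in>S. f (s(j := m)))"
proof -
  have inj: "inj_on (\<lambda>(m, s). s(j := m)) (S \<times> ({..<j} \<rightarrow>\<^sub>E S))"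
  proof (rule inj_onI, clarify)
    fix m s m' s'
    assume s: "s \<in> {..<j} \<rightarrow>\<^sub>E S" "s' \<in> {..<j} \<rightarrow>\<^sub>E S" and eq: "s(j := m) = s'(j := m')"
    then have "s = s'"
      by (intro PiE_ext[OF s]) (metis fun_upd_other less_irrefl lessThan_iff)
    with eq show "m = m' \<and> s = s'" by (metis fun_upd_same)
  qed
  have "(\<Sum>tau\<in>{..<Suc j} \<rightarrow>\<^sub>E S. f tau) = (\<Sum>(m, s)\<in>S \<times> ({..<j} \<rightarrow>\<^sub>E S). f (s(j := m)))"
    unfolding lessThan_Suc PiE_insert_eq by (subst sum.reindex[OF inj]) (simp add: case_prod_beta)
  also have "\<dots> = (\<Sum>s\<in>{..<j} \<rightarrow>\<^sub>E S. \<Sum>m\<in>S. f (s(j := m)))"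
    by (simp add: sum.cartesian_product[symmetric] sum.swap[of _ S])
  finally show ?thesis .
qed

lemma sum_PiE_lessThan_Suc_first:
  "(\<Sum>tau\<in>{..<Suc j} \<rightarrow>\<^sub>E S. f tau) = (\<Sum>m\<in>S. \<Sum>s\<in>{..<j} \<rightarrow>\<^sub>E S. f (case_nat m s))"
proof -
  have case_nat_eta: "case_nat (tau 0) (tau \<circ> Suc) = tau" for tau :: "nat \<Rightarrow> _"
    by (rule ext) (simp split: nat.split)
  have "(\<Sum>tau\<in>{..<Suc j} \<rightarrow>\<^sub>E S. f tau) = (\<Sum>(m, s)\<in>S \<times> ({..<j} \<rightarrow>\<^sub>E S). f (case_nat m s))"
    by (rule sum.reindex_bij_witness[where j = "\<lambda>tau. (tau 0, tau \<circ> Suc)"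
        and i = "\<lambda>(m, s). case_nat m s"])
      (auto simp: PiE_def extensional_def Pi_def split: nat.splits, metis case_nat_eta)
  then show ?thesis by (simp add: sum.cartesian_product)
qed

text \<open>
  Unnormalised forms of the averaged residual (for the norm \<open>N\<close>) and of the averaged Frobenius
  energy of the products of length \<open>j\<close>; dividing by \<open>T\<^sup>j\<^sup>+\<^sup>1\<close>, resp.\ \<open>T\<^sup>j\<close>, gives the averages.
\<close>

definition sum_sq_residual ::
    "(real^'n^'n \<Rightarrow> real) \<Rightarrow> (nat \<Rightarrow> real^'n^'n) \<Rightarrow> nat \<Rightarrow> nat \<Rightarrow> real" where
  "sum_sq_residual N P T j =
     (\<Sum>tau\<in>{..<j} \<rightarrow>\<^sub>E {..<T}. \<Sum>m<T. (N ((mat 1 - P m) ** proj_prod P tau j))\<^sup>2)"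

definition sum_sq_product :: "(nat \<Rightarrow> real^'n^'n) \<Rightarrow> nat \<Rightarrow> nat \<Rightarrow> real" where
  "sum_sq_product P T j = (\<Sum>tau\<in>{..<j} \<rightarrow>\<^sub>E {..<T}. (norm (proj_prod P tau j))\<^sup>2)"

lemma sum_sq_residual_spec_le_norm: "sum_sq_residual spec_norm P T j \<le> sum_sq_residual norm P T j"
  unfolding sum_sq_residual_def by (intro sum_mono power_mono spec_norm_le_norm spec_norm_nonneg)

lemma sum_sq_residual_spec_Suc_le:
  assumes "\<And>m. m < T \<Longrightarrow> orth_proj (P m)"
  shows "sum_sq_residual spec_norm P T (Suc j) \<le> real T * sum_sq_residual spec_norm P T j"
proof -
  have "(spec_norm ((mat 1 - P m') ** proj_prod P (case_nat m s) (Suc j)))\<^sup>2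
          \<le> (spec_norm ((mat 1 - P m') ** proj_prod P s j))\<^sup>2" if "m < T" for m m' s
  proof -
    have "(mat 1 - P m') ** proj_prod P (case_nat m s) (Suc j) = ((mat 1 - P m') ** proj_prod P s j) ** P m"
      unfolding proj_prod_Suc_right by (simp add: matrix_mul_assoc o_def)
    then show ?thesis
      using spec_norm_mult_orth_proj_le[OF assms[OF that]] by (simp add: power_mono spec_norm_nonneg)
  qed
  then have "sum_sq_residual spec_norm P T (Suc j)
      \<le> (\<Sum>m<T. \<Sum>s\<in>{..<j} \<rightarrow>\<^sub>E {..<T}. \<Sum>m'<T. (spec_norm ((mat 1 - P m') ** proj_prod P s j))\<^sup>2)"
    unfolding sum_sq_residual_def sum_PiE_lessThan_Suc_first by (intro sum_mono) auto
  also have "\<dots> = real T * sum_sq_residual spec_norm P T j"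
    by (simp add: sum_sq_residual_def)
  finally show ?thesis .
qed

lemma sum_sq_product_Suc:
  assumes "\<And>m. m < T \<Longrightarrow> orth_proj (P m)"
  shows "sum_sq_product P T (Suc j) = real T * sum_sq_product P T j - sum_sq_residual norm P T j"
proof -
  have "(norm (proj_prod P (s(j := m)) (Suc j)))\<^sup>2
          = (norm (proj_prod P s j))\<^sup>2 - (norm ((mat 1 - P m) ** proj_prod P s j))\<^sup>2"
    if "m < T" for s m
  proof -
    have "proj_prod P (s(j := m)) (Suc j) = P m ** proj_prod P s j"
      using proj_prod_cong[of j "s(j := m)" s P] by simp
    then show ?thesis
      using orth_proj_pythagorean_matrix[OF assms[OF that], of "proj_prod P s j"]
      by (simp add: eq_diff_eq)
  qed
  then show ?thesis
    unfolding sum_sq_product_def sum_sq_residual_def sum_PiE_lessThan_Suc_last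
    by (simp add: sum_subtractf sum_distrib_left)
qed

lemma sum_sq_product_1:
  assumes "\<And>m. m < T \<Longrightarrow> orth_proj (P m)"
  shows "sum_sq_product P T 1 = (\<Sum>m<T. real (rank (P m)))"
  using assms by (simp add: sum_sq_product_def sum_PiE_lessThan_Suc_last power2_norm_orth_proj)

text \<open>
  The invariant \<open>k a\<^sub>k + g\<^sub>k\<^sub>+\<^sub>1 \<le> c\<^sup>k g\<^sub>1\<close>: each step adds \<open>a\<^sub>k\<^sub>+\<^sub>1 \<le> b\<^sub>k\<^sub>+\<^sub>1\<close> and removes \<open>b\<^sub>k\<^sub>+\<^sub>1\<close>.
\<close>

lemma telescoping_descent_bound:
  fixes a b g :: "nat \<Rightarrow> real" and c :: real
  assumes "c \<ge> 0"
    and a_Suc: "\<And>j. a (Suc j) \<le> c * a j"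
    and a_le_b: "\<And>j. a j \<le> b j"
    and g_Suc: "\<And>j. g (Suc j) = c * g j - b j"
    and g_nonneg: "\<And>j. g j \<ge> 0"
  shows "real k * a k \<le> c ^ k * g 1"
proof -
  have "real k * a k + g (Suc k) \<le> c ^ k * g 1"
  proof (induction k)
    case (Suc k)
    have "real (Suc k) * a (Suc k) + g (Suc (Suc k)) \<le> real k * a (Suc k) + c * g (Suc k)"
      using a_le_b[of "Suc k"] g_Suc[of "Suc k"] by (simp add: algebra_simps)
    also have "\<dots> \<le> c * (real k * a k + g (Suc k))"
      using mult_left_mono[OF a_Suc[of k], of "real k"] by (simp add: algebra_simps)
    also have "\<dots> \<le> c ^ Suc k * g 1"
      using mult_left_mono[OF Suc \<open>c \<ge> 0\<close>] by simp
    finally show ?case .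
  qed simp
  then show ?thesis using g_nonneg[of "Suc k"] by linarith
qed

theorem mainTheorem8:
  fixes P :: "nat \<Rightarrow> real^'n^'n" and T k :: nat
  assumes "T \<ge> 1"
    and "\<And>m. m < T \<Longrightarrow> orth_proj (P m)"
    and "k \<ge> 1"
  shows "(1 / real T ^ k) *
           (\<Sum>tau \<in> {..<k} \<rightarrow>\<^sub>E {..<T}.
              (1 / real T) * (\<Sum>m<T. (spec_norm ((mat 1 - P m) ** proj_prod P tau k))\<^sup>2))
         \<le> (1 / real k) * ((1 / real T) * (\<Sum>m<T. real (rank (P m))))
       \<and> (1 / real k) * ((1 / real T) * (\<Sum>m<T. real (rank (P m))))
         = (real CARD('n) - (1 / real T) * (\<Sum>m<T. real CARD('n) - real (rank (P m)))) / real k"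
proof
  have T: "real T > 0" and k: "real k > 0" using assms(1,3) by simp_all
  have "sum_sq_product P T j \<ge> 0" for j
    unfolding sum_sq_product_def by (simp add: sum_nonneg)
  then have "real k * sum_sq_residual spec_norm P T k \<le> real T ^ k * sum_sq_product P T 1"
    by (intro telescoping_descent_bound[where a = "sum_sq_residual spec_norm P T"
          and b = "sum_sq_residual norm P T" and g = "sum_sq_product P T"]
        sum_sq_residual_spec_Suc_le sum_sq_residual_spec_le_norm sum_sq_product_Suc assms(2)) simp_all
  then have "real k * sum_sq_residual spec_norm P T k \<le> real T ^ k * (\<Sum>m<T. real (rank (P m)))"
    by (simp only: sum_sq_product_1[OF assms(2)])
  then have "sum_sq_residual spec_norm P T k / (real T ^ k * real T)
      \<le> (1 / real k) * ((1 / real T) * (\<Sum>m<T. real (rank (P m))))"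
    using T k by (simp add: field_simps)
  then show "(1 / real T ^ k) *
           (\<Sum>tau \<in> {..<k} \<rightarrow>\<^sub>E {..<T}.
              (1 / real T) * (\<Sum>m<T. (spec_norm ((mat 1 - P m) ** proj_prod P tau k))\<^sup>2))
         \<le> (1 / real k) * ((1 / real T) * (\<Sum>m<T. real (rank (P m))))"
    by (simp add: sum_sq_residual_def sum_distrib_left[symmetric] sum_divide_distrib[symmetric])
  show "(1 / real k) * ((1 / real T) * (\<Sum>m<T. real (rank (P m))))
         = (real CARD('n) - (1 / real T) * (\<Sum>m<T. real CARD('n) - real (rank (P m)))) / real k"
    using T by (simp add: sum_subtractf field_simps)
qed

end
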